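(* Let $G$ be a finite graph, let $t\ge 0$ be an integer, and let $H$ be a nonempty $t$-minor of $G$. Then $$\frac{\beta(H)}{\alpha(H)}\le \hat\beta_t(G),$$ where $\alpha(H)$ is the size of a largest independent set in $H$.
   Context: All graphs are finite and simple. For an integer $t\ge 0$, a graph $H$ is a $t$-shallow minor ($t$-minor) of a graph $G$ if there are pairwise disjoint sets $V_v\subseteq V(G)$, $v\in V(H)$, each inducing a connected subgraph of $G$ of radius at most $t$, such that $uv\in E(H)$ if and only if some edge of $G$ joins $V_u$ and $V_v$. For a graph $H$, $\beta(H)$ is the minimum number of cliques partitioning $V(H)$; for $x\in V(H)$, $H_x$ is the subgraph induced by the closed neighborhood $N_H[x]$; $\tilde\beta(H)=\min_{x\in V(H)}\beta(H_x)$; and $\hat\beta_t(G)=\max\{\tilde\beta(H): H \text{ a nonempty } t\text{-minor of } G\}$. *)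

theory Defs
  imports Complex_Main "HOL-Library.Disjoint_Sets"
begin

type_synonym 'a graph = "'a set \<times> ('a \<Rightarrow> 'a \<Rightarrow> bool)"

definition verts :: "'a graph \<Rightarrow> 'a set" where "verts G = fst G"
definition adj :: "'a graph \<Rightarrow> 'a \<Rightarrow> 'a \<Rightarrow> bool" where "adj G = snd G"

definition fin_simple_graph :: "'a graph \<Rightarrow> bool" where
  "fin_simple_graph G \<longleftrightarrow> finite (verts G)
     \<and> (\<forall>u v. adj G u v \<longrightarrow> u \<in> verts G \<and> v \<in> verts G)
     \<and> (\<forall>u v. adj G u v \<longrightarrow> adj G v u)
     \<and> (\<forall>u. \<not> adj G u u)"

definition induced :: "'a graph \<Rightarrow> 'a set \<Rightarrow> 'a graph" where
  "induced G S = (S \<inter> verts G, \<lambda>u v. adj G u v \<and> u \<in> S \<and> v \<in> S)"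

text \<open>G[S] is connected of radius at most t: some centre c in S reaches every
  vertex of S by a path inside S with at most t edges.\<close>
definition radius_le :: "'a graph \<Rightarrow> 'a set \<Rightarrow> nat \<Rightarrow> bool" where
  "radius_le G S t \<longleftrightarrow> (\<exists>c\<in>S. \<forall>v\<in>S. \<exists>p. p \<noteq> [] \<and> hd p = c \<and> last p = v
      \<and> set p \<subseteq> S \<and> length p \<le> t + 1
      \<and> (\<forall>i. i + 1 < length p \<longrightarrow> adj G (p ! i) (p ! (i + 1))))"

definition shallow_minor :: "nat \<Rightarrow> 'a graph \<Rightarrow> 'b graph \<Rightarrow> bool" where
  "shallow_minor t G H \<longleftrightarrow> fin_simple_graph H \<and>
     (\<exists>B :: 'b \<Rightarrow> 'a set.
        (\<forall>v\<in>verts H. B v \<subseteq> verts G \<and> radius_le G (B v) t)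
      \<and> (\<forall>u\<in>verts H. \<forall>v\<in>verts H. u \<noteq> v \<longrightarrow> B u \<inter> B v = {})
      \<and> (\<forall>u\<in>verts H. \<forall>v\<in>verts H. u \<noteq> v \<longrightarrow>
           (adj H u v \<longleftrightarrow> (\<exists>a\<in>B u. \<exists>b\<in>B v. adj G a b))))"

definition is_clique :: "'a graph \<Rightarrow> 'a set \<Rightarrow> bool" where
  "is_clique G C \<longleftrightarrow> C \<subseteq> verts G \<and> (\<forall>u\<in>C. \<forall>v\<in>C. u \<noteq> v \<longrightarrow> adj G u v)"

definition is_indep :: "'a graph \<Rightarrow> 'a set \<Rightarrow> bool" where
  "is_indep G I \<longleftrightarrow> I \<subseteq> verts G \<and> (\<forall>u\<in>I. \<forall>v\<in>I. \<not> adj G u v)"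

definition clique_cover_number :: "'a graph \<Rightarrow> nat" where
  "clique_cover_number G =
     Min {card P | P. partition_on (verts G) P \<and> (\<forall>C\<in>P. is_clique G C)}"

definition indep_number :: "'a graph \<Rightarrow> nat" where
  "indep_number G = Max {card I | I. is_indep G I}"

definition closed_nbhd :: "'a graph \<Rightarrow> 'a \<Rightarrow> 'a set" where
  "closed_nbhd G x = insert x {y \<in> verts G. adj G x y}"

definition local_beta :: "'a graph \<Rightarrow> nat" where
  "local_beta H = Min ((\<lambda>x. clique_cover_number (induced H (closed_nbhd H x))) ` verts H)"

text \<open>hat beta_t(G): max of tilde beta over nonempty t-minors of G.  Minors are
  taken with vertices in nat; every finite graph has an isomorphic copy on nat.\<close>
definition hat_beta :: "nat \<Rightarrow> 'a graph \<Rightarrow> nat" where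
  "hat_beta t G = Max {local_beta H | H :: nat graph. shallow_minor t G H \<and> verts H \<noteq> {}}"

end

theory Submission
  imports Defs
begin

text \<open>Greedy argument: suppose every nonempty S \<subseteq> V(H) contains a vertex x whose closed
  neighbourhood within S is covered by at most k cliques of H. Repeatedly picking such an x,
  adding it to an independent set and deleting its closed neighbourhood partitions V(H) into at
  most k cliques per chosen vertex, so \<beta>(H) \<le> k \<alpha>(H). For a t-minor H of G this holds with
  k = hat_beta t G, because the induced subgraph H[S] is again a t-minor of G, so some x in S
  has \<beta>(H[S]_x) = local_beta (H[S]) \<le> hat_beta t G.\<close>

lemma verts_pair [simp]: "verts (A, R) = A"
  by (simp add: verts_def)

lemma adj_pair [simp]: "adj (A, R) = R"
  by (simp add: adj_def)

lemma verts_induced [simp]: "verts (induced G S) = S \<inter> verts G"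
  by (simp add: induced_def)

lemma adj_induced [simp]: "adj (induced G S) u v \<longleftrightarrow> adj G u v \<and> u \<in> S \<and> v \<in> S"
  by (simp add: induced_def)

lemma fin_simple_graph_induced:
  "fin_simple_graph G \<Longrightarrow> fin_simple_graph (induced G S)"
  by (auto simp: fin_simple_graph_def)

lemma finite_clique_cover_sizes:
  assumes "finite (verts G)"
  shows "finite {card P | P. partition_on (verts G) P \<and> (\<forall>C\<in>P. is_clique G C)}"
proof (rule finite_subset)
  show "finite (card ` {P. partition_on (verts G) P})"
    using finitely_many_partition_on[OF assms] by simp
qed blast

lemma singleton_clique_cover:
  "partition_on (verts G) ((\<lambda>x. {x}) ` verts G) \<and> (\<forall>C\<in>(\<lambda>x. {x}) ` verts G. is_clique G C)"
  by (auto simp: partition_on_singletons is_clique_def)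

lemma clique_cover_number_le:
  assumes "finite (verts G)" "partition_on (verts G) P" "\<forall>C\<in>P. is_clique G C"
  shows "clique_cover_number G \<le> card P"
  unfolding clique_cover_number_def
  using assms by (intro Min_le finite_clique_cover_sizes) blast+

lemma clique_cover_number_attained:
  assumes "finite (verts G)"
  obtains P where "partition_on (verts G) P" "\<forall>C\<in>P. is_clique G C"
    "card P = clique_cover_number G"
proof -
  have "clique_cover_number G
          \<in> {card P | P. partition_on (verts G) P \<and> (\<forall>C\<in>P. is_clique G C)}"
    unfolding clique_cover_number_def
    using finite_clique_cover_sizes[OF assms] singleton_clique_cover by (intro Min_in) blast+
  then show ?thesis
    using that by force
qed

lemma clique_cover_number_le_card:
  assumes "finite (verts G)"
  shows "clique_cover_number G \<le> card (verts G)"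
proof -
  have "clique_cover_number G \<le> card ((\<lambda>x. {x}) ` verts G)"
    using assms singleton_clique_cover[of G] by (intro clique_cover_number_le) auto
  also have "\<dots> = card (verts G)"
    by (rule card_image) (auto simp: inj_on_def)
  finally show ?thesis .
qed

lemma is_clique_induced: "is_clique (induced G T) C \<Longrightarrow> is_clique G C"
  by (auto simp: is_clique_def)

lemma clique_cover_number_le_of_surj_hom:
  assumes "finite (verts K)" "inj_on g (verts K)" "g ` verts K = verts H"
    and hom: "\<And>a b. a \<in> verts K \<Longrightarrow> b \<in> verts K \<Longrightarrow> adj K a b \<Longrightarrow> adj H (g a) (g b)"
  shows "clique_cover_number H \<le> clique_cover_number K"
proof -
  obtain P where P: "partition_on (verts K) P" "\<forall>C\<in>P. is_clique K C"
    "card P = clique_cover_number K"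
    using clique_cover_number_attained[OF assms(1)] .
  let ?Q = "(`) g ` P - {{}}"
  have "partition_on (verts H) ?Q"
    using partition_on_inj_image[OF P(1) assms(2)] assms(3) by simp
  moreover have "is_clique H (g ` C)" if "C \<in> P" for C
  proof -
    have C: "is_clique K C"
      using P(2) that by blast
    then have "g ` C \<subseteq> verts H"
      using assms(3) by (auto simp: is_clique_def)
    moreover have "adj H (g a) (g b)" if "a \<in> C" "b \<in> C" "g a \<noteq> g b" for a b
    proof -
      have "a \<noteq> b"
        using that(3) by blast
      with C that(1,2) show ?thesis
        by (intro hom) (auto simp: is_clique_def)
    qed
    ultimately show ?thesis
      by (auto simp: is_clique_def)
  qed
  ultimately have "clique_cover_number H \<le> card ?Q"
    using assms(1,3) by (intro clique_cover_number_le) (auto dest: finite_imageI[of _ g])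
  also have "\<dots> \<le> card ((`) g ` P)"
    using finite_elements[OF assms(1) P(1)] by (intro card_mono) auto
  also have "\<dots> \<le> card P"
    using finite_elements[OF assms(1) P(1)] by (rule card_image_le)
  finally show ?thesis
    using P(3) by simp
qed

lemma card_le_indep_number:
  assumes "finite (verts G)" "is_indep G I"
  shows "card I \<le> indep_number G"
  unfolding indep_number_def
proof (rule Max_ge)
  show "finite {card I | I. is_indep G I}"
    by (rule finite_subset[of _ "card ` Pow (verts G)"]) (use assms(1) in \<open>auto simp: is_indep_def\<close>)
qed (use assms(2) in blast)

lemma indep_number_pos:
  assumes "fin_simple_graph G" "verts G \<noteq> {}"
  shows "0 < indep_number G"
proof -
  obtain v where "v \<in> verts G"
    using assms(2) by blast
  with assms(1) have "is_indep G {v}"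
    by (auto simp: is_indep_def fin_simple_graph_def)
  then show ?thesis
    using card_le_indep_number[of G "{v}"] assms(1) by (simp add: fin_simple_graph_def)
qed

lemma radius_le_nonempty: "radius_le G S t \<Longrightarrow> S \<noteq> {}"
  unfolding radius_le_def by auto

lemma shallow_minorE:
  assumes "shallow_minor t G H"
  obtains B where "fin_simple_graph H"
    "\<And>v. v \<in> verts H \<Longrightarrow> B v \<subseteq> verts G \<and> radius_le G (B v) t"
    "\<And>u v. u \<in> verts H \<Longrightarrow> v \<in> verts H \<Longrightarrow> u \<noteq> v \<Longrightarrow> B u \<inter> B v = {}"
    "\<And>u v. u \<in> verts H \<Longrightarrow> v \<in> verts H \<Longrightarrow> u \<noteq> v \<Longrightarrow>
       adj H u v \<longleftrightarrow> (\<exists>a\<in>B u. \<exists>b\<in>B v. adj G a b)"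
proof -
  obtain B where "fin_simple_graph H" "\<forall>v\<in>verts H. B v \<subseteq> verts G \<and> radius_le G (B v) t"
    "\<forall>u\<in>verts H. \<forall>v\<in>verts H. u \<noteq> v \<longrightarrow> B u \<inter> B v = {}"
    "\<forall>u\<in>verts H. \<forall>v\<in>verts H. u \<noteq> v \<longrightarrow> (adj H u v \<longleftrightarrow> (\<exists>a\<in>B u. \<exists>b\<in>B v. adj G a b))"
    using assms unfolding shallow_minor_def by blast
  then show thesis
    by (intro that[of B]) simp_all
qed

lemma card_verts_le_of_shallow_minor:
  assumes "fin_simple_graph G" "shallow_minor t G H"
  shows "card (verts H) \<le> card (verts G)"
proof -
  obtain B where "fin_simple_graph H"
    and B: "\<And>v. v \<in> verts H \<Longrightarrow> B v \<subseteq> verts G \<and> radius_le G (B v) t"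
      "\<And>u v. u \<in> verts H \<Longrightarrow> v \<in> verts H \<Longrightarrow> u \<noteq> v \<Longrightarrow> B u \<inter> B v = {}"
    and "\<And>u v. u \<in> verts H \<Longrightarrow> v \<in> verts H \<Longrightarrow> u \<noteq> v \<Longrightarrow>
       adj H u v \<longleftrightarrow> (\<exists>a\<in>B u. \<exists>b\<in>B v. adj G a b)"
    using assms(2) by (erule shallow_minorE)
  define c where "c v = (SOME a. a \<in> B v)" for v
  have c: "c v \<in> B v" if "v \<in> verts H" for v
    unfolding c_def using B(1)[OF that] radius_le_nonempty[of G "B v" t] by (simp add: some_in_eq)
  have "inj_on c (verts H)"
  proof (rule inj_onI)
    fix u v
    assume "u \<in> verts H" "v \<in> verts H" "c u = c v"
    then show "u = v"
      using B(2)[of u v] c[of u] c[of v] by auto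
  qed
  moreover have "c ` verts H \<subseteq> verts G"
    using B(1) c by blast
  moreover have "finite (verts G)"
    using assms(1) by (simp add: fin_simple_graph_def)
  ultimately show ?thesis
    by (rule card_inj_on_le)
qed

lemma shallow_minor_induced:
  assumes "shallow_minor t G H"
  shows "shallow_minor t G (induced H S)"
proof -
  obtain B where "fin_simple_graph H"
    "\<And>v. v \<in> verts H \<Longrightarrow> B v \<subseteq> verts G \<and> radius_le G (B v) t"
    "\<And>u v. u \<in> verts H \<Longrightarrow> v \<in> verts H \<Longrightarrow> u \<noteq> v \<Longrightarrow> B u \<inter> B v = {}"
    "\<And>u v. u \<in> verts H \<Longrightarrow> v \<in> verts H \<Longrightarrow> u \<noteq> v \<Longrightarrow>
       adj H u v \<longleftrightarrow> (\<exists>a\<in>B u. \<exists>b\<in>B v. adj G a b)"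
    using assms by (erule shallow_minorE)
  then show ?thesis
    unfolding shallow_minor_def
    by (intro conjI exI[of _ B] fin_simple_graph_induced) auto
qed

text \<open>\<open>hat_beta\<close> only ranges over minors with vertex type nat; pulling H back along a
  bijection onto V(H) provides such a copy.\<close>
definition pullback :: "('c \<Rightarrow> 'b) \<Rightarrow> 'c set \<Rightarrow> 'b graph \<Rightarrow> 'c graph" where
  "pullback g W H = (W, \<lambda>u v. u \<in> W \<and> v \<in> W \<and> adj H (g u) (g v))"

lemma verts_pullback [simp]: "verts (pullback g W H) = W"
  by (simp add: pullback_def)

lemma adj_pullback [simp]: "adj (pullback g W H) u v \<longleftrightarrow> u \<in> W \<and> v \<in> W \<and> adj H (g u) (g v)"
  by (simp add: pullback_def)

lemma shallow_minor_pullback: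
  assumes "shallow_minor t G H" "bij_betw g W (verts H)"
  shows "shallow_minor t G (pullback g W H)"
proof -
  obtain B where H: "fin_simple_graph H"
    and B: "\<And>v. v \<in> verts H \<Longrightarrow> B v \<subseteq> verts G \<and> radius_le G (B v) t"
      "\<And>u v. u \<in> verts H \<Longrightarrow> v \<in> verts H \<Longrightarrow> u \<noteq> v \<Longrightarrow> B u \<inter> B v = {}"
      "\<And>u v. u \<in> verts H \<Longrightarrow> v \<in> verts H \<Longrightarrow> u \<noteq> v \<Longrightarrow>
         adj H u v \<longleftrightarrow> (\<exists>a\<in>B u. \<exists>b\<in>B v. adj G a b)"
    using assms(1) by (erule shallow_minorE)
  have g: "g u \<in> verts H" if "u \<in> W" for u
    using assms(2) that by (auto simp: bij_betw_def)
  have g_neq: "g u \<noteq> g v" if "u \<in> W" "v \<in> W" "u \<noteq> v" for u v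
    using assms(2) that by (auto simp: bij_betw_def inj_on_def)
  have "fin_simple_graph (pullback g W H)"
    using H assms(2) bij_betw_finite by (auto simp: fin_simple_graph_def)
  moreover have "(B \<circ> g) u \<inter> (B \<circ> g) v = {}"
    and "adj (pullback g W H) u v \<longleftrightarrow> (\<exists>a\<in>(B \<circ> g) u. \<exists>b\<in>(B \<circ> g) v. adj G a b)"
    if "u \<in> W" "v \<in> W" "u \<noteq> v" for u v
    using B(2,3)[OF g g g_neq] that by simp_all
  ultimately show ?thesis
    unfolding shallow_minor_def using B(1) g by (intro conjI exI[of _ "B \<circ> g"]) auto
qed

lemma finite_verts_of_shallow_minor: "shallow_minor t G H \<Longrightarrow> finite (verts H)"
  by (simp add: shallow_minor_def fin_simple_graph_def)

lemma local_beta_le: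
  assumes "finite (verts H)" "x \<in> verts H"
  shows "local_beta H \<le> clique_cover_number (induced H (closed_nbhd H x))"
  unfolding local_beta_def using assms by (intro Min_le) auto

lemma local_beta_attained:
  assumes "finite (verts H)" "verts H \<noteq> {}"
  obtains x where "x \<in> verts H" "local_beta H = clique_cover_number (induced H (closed_nbhd H x))"
proof -
  have "local_beta H \<in> (\<lambda>x. clique_cover_number (induced H (closed_nbhd H x))) ` verts H"
    unfolding local_beta_def using assms by (intro Min_in) auto
  then show ?thesis
    using that by force
qed

lemma local_beta_le_card:
  assumes "finite (verts H)" "verts H \<noteq> {}"
  shows "local_beta H \<le> card (verts H)"
proof -
  obtain x where x: "x \<in> verts H"
    using assms(2) by blast
  have "local_beta H \<le> clique_cover_number (induced H (closed_nbhd H x))"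
    using assms(1) x by (rule local_beta_le)
  also have "\<dots> \<le> card (verts (induced H (closed_nbhd H x)))"
    using assms(1) by (intro clique_cover_number_le_card) simp
  also have "\<dots> \<le> card (verts H)"
    using assms(1) by (simp add: card_mono)
  finally show ?thesis .
qed

lemma image_closed_nbhd_pullback:
  assumes "bij_betw g W (verts H)" "y \<in> W"
  shows "g ` closed_nbhd (pullback g W H) y = closed_nbhd H (g y)"
proof -
  have "g ` {z \<in> W. adj H (g y) (g z)} = {w \<in> verts H. adj H (g y) w}"
    using assms(1) by (auto simp: bij_betw_def)
  then show ?thesis
    using assms(2) by (simp add: closed_nbhd_def)
qed

lemma local_beta_le_pullback:
  assumes g: "bij_betw g W (verts H)" and "finite W" "W \<noteq> {}"
  shows "local_beta H \<le> local_beta (pullback g W H)"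
proof -
  let ?P = "pullback g W H"
  obtain y where y: "y \<in> W" "local_beta ?P = clique_cover_number (induced ?P (closed_nbhd ?P y))"
    using local_beta_attained[of ?P] assms(2,3) by auto
  let ?K = "induced ?P (closed_nbhd ?P y)"
  have gy: "g y \<in> verts H"
    using g y(1) by (auto simp: bij_betw_def)
  have image: "g ` verts ?K = verts (induced H (closed_nbhd H (g y)))"
  proof -
    have "closed_nbhd ?P y \<subseteq> W" and "closed_nbhd H (g y) \<subseteq> verts H"
      using y(1) gy by (auto simp: closed_nbhd_def)
    then show ?thesis
      using image_closed_nbhd_pullback[OF g y(1)] by (simp add: Int_absorb2)
  qed
  have "local_beta H \<le> clique_cover_number (induced H (closed_nbhd H (g y)))"
    using g assms(2) gy by (intro local_beta_le) (auto dest: bij_betw_finite)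
  also have "\<dots> \<le> clique_cover_number ?K"
  proof (rule clique_cover_number_le_of_surj_hom)
    show "finite (verts ?K)"
      using assms(2) by simp
    show "inj_on g (verts ?K)"
      using g by (auto simp: bij_betw_def intro: inj_on_subset)
    show "adj (induced H (closed_nbhd H (g y))) (g a) (g b)"
      if "a \<in> verts ?K" "b \<in> verts ?K" "adj ?K a b" for a b
      using that image by auto
  qed (rule image)
  finally show ?thesis
    using y(2) by simp
qed

lemma local_beta_le_card_of_shallow_minor:
  assumes "fin_simple_graph G" "shallow_minor t G H" "verts H \<noteq> {}"
  shows "local_beta H \<le> card (verts G)"
proof -
  have "local_beta H \<le> card (verts H)"
    using finite_verts_of_shallow_minor[OF assms(2)] assms(3) by (rule local_beta_le_card)
  also have "\<dots> \<le> card (verts G)"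
    using assms(1,2) by (rule card_verts_le_of_shallow_minor)
  finally show ?thesis .
qed

lemma local_beta_le_hat_beta:
  assumes G: "fin_simple_graph G" and H: "shallow_minor t G H" "verts H \<noteq> {}"
  shows "local_beta H \<le> hat_beta t G"
proof -
  have fin: "finite (verts H)"
    using H(1) by (rule finite_verts_of_shallow_minor)
  then obtain g where g: "bij_betw g {0..<card (verts H)} (verts H)"
    using ex_bij_betw_nat_finite by blast
  let ?H = "pullback g {0..<card (verts H)} H"
  have "{0..<card (verts H)} \<noteq> {}"
    using fin H(2) by auto
  then have "local_beta H \<le> local_beta ?H"
    using g by (intro local_beta_le_pullback) auto
  also have "\<dots> \<le> hat_beta t G"
    unfolding hat_beta_def
  proof (rule Max_ge)
    let ?B = "{local_beta H' | H' :: nat graph. shallow_minor t G H' \<and> verts H' \<noteq> {}}"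
    have "?B \<subseteq> {..card (verts G)}"
      using local_beta_le_card_of_shallow_minor[OF G] unfolding atMost_def by blast
    then show "finite ?B"
      using finite_subset by blast
    show "local_beta ?H \<in> ?B"
    proof -
      have "verts ?H \<noteq> {}"
        using \<open>{0..<card (verts H)} \<noteq> {}\<close> by simp
      then show ?thesis
        using shallow_minor_pullback[OF H(1) g] by blast
    qed
  qed
  finally show ?thesis .
qed

definition locally_clique_coverable :: "nat \<Rightarrow> 'a graph \<Rightarrow> bool" where
  "locally_clique_coverable k H \<longleftrightarrow>
     (\<forall>S\<subseteq>verts H. S \<noteq> {} \<longrightarrow> (\<exists>x\<in>S. \<exists>P. partition_on (closed_nbhd H x \<inter> S) P
        \<and> (\<forall>C\<in>P. is_clique H C) \<and> card P \<le> k))"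

lemma locally_clique_coverable_hat_beta:
  assumes G: "fin_simple_graph G" and H: "shallow_minor t G H"
  shows "locally_clique_coverable (hat_beta t G) H"
  unfolding locally_clique_coverable_def
proof (intro allI impI)
  fix S
  assume S: "S \<subseteq> verts H" "S \<noteq> {}"
  let ?K = "induced H S"
  have K: "shallow_minor t G ?K" "verts ?K = S"
    using H S(1) by (auto intro: shallow_minor_induced)
  then obtain x where x: "x \<in> S"
    and lb: "local_beta ?K = clique_cover_number (induced ?K (closed_nbhd ?K x))"
    using local_beta_attained[of ?K] finite_verts_of_shallow_minor S(2) by metis
  let ?L = "induced ?K (closed_nbhd ?K x)"
  obtain P where P: "partition_on (verts ?L) P" "\<forall>C\<in>P. is_clique ?L C"
    "card P = clique_cover_number ?L"
    using clique_cover_number_attained[of ?L] finite_verts_of_shallow_minor[OF K(1)] by auto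
  have "verts ?L = closed_nbhd H x \<inter> S"
    using x S(1) by (auto simp: closed_nbhd_def)
  moreover have "\<forall>C\<in>P. is_clique H C"
    using P(2) by (blast intro: is_clique_induced)
  moreover have "card P \<le> hat_beta t G"
    using P(3) lb local_beta_le_hat_beta[OF G K(1)] K(2) S(2) by simp
  ultimately show "\<exists>x\<in>S. \<exists>P. partition_on (closed_nbhd H x \<inter> S) P
      \<and> (\<forall>C\<in>P. is_clique H C) \<and> card P \<le> hat_beta t G"
    using x P(1) by auto
qed

lemma partition_on_Un:
  assumes "partition_on A P" "partition_on B Q" "A \<inter> B = {}"
  shows "partition_on (A \<union> B) (P \<union> Q)"
  using assms disjoint_union[of P Q] unfolding partition_on_def by auto

lemma is_indep_insert:
  assumes "fin_simple_graph H" "is_indep H I" "x \<in> verts H" "\<forall>y\<in>I. \<not> adj H x y"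
  shows "is_indep H (insert x I)"
  using assms unfolding is_indep_def fin_simple_graph_def by blast

lemma greedy_clique_cover:
  assumes H: "fin_simple_graph H" and k: "locally_clique_coverable k H"
  shows "S \<subseteq> verts H \<Longrightarrow> \<exists>P I. partition_on S P \<and> (\<forall>C\<in>P. is_clique H C)
           \<and> is_indep H I \<and> I \<subseteq> S \<and> card P \<le> k * card I"
proof (induction "card S" arbitrary: S rule: less_induct)
  case less
  have finS: "finite S"
    using less.prems H finite_subset by (auto simp: fin_simple_graph_def)
  show ?case
  proof (cases "S = {}")
    case True
    then show ?thesis
      by (intro exI[of _ "{}"]) (simp add: partition_on_empty is_indep_def)
  next
    case False
    obtain x P1 where x: "x \<in> S" and P1: "partition_on (closed_nbhd H x \<inter> S) P1"
      "\<forall>C\<in>P1. is_clique H C" "card P1 \<le> k"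
      using k less.prems False unfolding locally_clique_coverable_def by blast
    define S' where "S' = S - closed_nbhd H x"
    have "x \<in> closed_nbhd H x"
      by (simp add: closed_nbhd_def)
    then have "card S' < card S"
      unfolding S'_def using finS x by (intro psubset_card_mono) auto
    then obtain P2 I2 where P2: "partition_on S' P2" "\<forall>C\<in>P2. is_clique H C"
      and I2: "is_indep H I2" "I2 \<subseteq> S'" and card2: "card P2 \<le> k * card I2"
      using less.hyps less.prems unfolding S'_def by blast
    have part: "partition_on S (P1 \<union> P2)"
    proof -
      have "partition_on ((closed_nbhd H x \<inter> S) \<union> S') (P1 \<union> P2)"
        using P1(1) P2(1) unfolding S'_def by (rule partition_on_Un) blast
      moreover have "(closed_nbhd H x \<inter> S) \<union> S' = S"
        unfolding S'_def by blast
      ultimately show ?thesis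
        by simp
    qed
    have "\<forall>y\<in>I2. \<not> adj H x y"
      using I2 unfolding S'_def closed_nbhd_def is_indep_def by blast
    then have indep: "is_indep H (insert x I2)"
      using H I2(1) x less.prems by (intro is_indep_insert) auto
    have "x \<notin> I2" "finite I2"
      using I2(2) \<open>x \<in> closed_nbhd H x\<close> finS finite_subset unfolding S'_def by auto
    then have "card (P1 \<union> P2) \<le> k * card (insert x I2)"
      using card_Un_le[of P1 P2] P1(3) card2 by simp
    moreover have "insert x I2 \<subseteq> S"
      using x I2(2) unfolding S'_def by blast
    ultimately show ?thesis
      using part P1(2) P2(2) indep by blast
  qed
qed

lemma clique_cover_number_le_mult_indep_number:
  assumes H: "fin_simple_graph H" and "locally_clique_coverable k H"
  shows "clique_cover_number H \<le> k * indep_number H"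
proof -
  have fin: "finite (verts H)"
    using H by (simp add: fin_simple_graph_def)
  obtain P I where "partition_on (verts H) P" "\<forall>C\<in>P. is_clique H C" "is_indep H I"
    "card P \<le> k * card I"
    using greedy_clique_cover[OF assms] by blast
  then show ?thesis
    using clique_cover_number_le[OF fin] card_le_indep_number[OF fin]
    by (meson le_trans mult_le_mono2)
qed

theorem theorem2p3:
  fixes G :: "'a graph" and H :: "'b graph" and t :: nat
  assumes "fin_simple_graph G"
    and "shallow_minor t G H"
    and "verts H \<noteq> {}"
  shows "real (clique_cover_number H) / real (indep_number H) \<le> real (hat_beta t G)"
proof -
  have H: "fin_simple_graph H"
    using assms(2) by (simp add: shallow_minor_def)
  have "clique_cover_number H \<le> hat_beta t G * indep_number H"
    using H locally_clique_coverable_hat_beta[OF assms(1,2)]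
    by (rule clique_cover_number_le_mult_indep_number)
  moreover have "0 < indep_number H"
    using H assms(3) by (rule indep_number_pos)
  ultimately show ?thesis
    by (simp add: divide_le_eq flip: of_nat_mult)
qed

end
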